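(* Let $d \ge 3$ and let $a,b$ be integers with $1 \le a \le b < a(d-1)$. For every integer $k$ with $1 \le k \le a$, there exist a finite simple graph $H$, a vertex $r$ of $H$, and an additional "attachment edge" $e$ incident to $r$ (whose other endpoint lies outside $H$), such that every vertex of $H$ has degree at most $d$ when $e$ is counted at $r$, and: (i) if $e$ is given label $2k$, then there is an assignment of nonnegative integer labels to the edges of $H$ such that every vertex of $H$ is valid and every vertex of $H$ is joined to $r$ by a path of edges of $H$ with positive labels; (ii) for every integer $x$ with $0 \le x < 2k$, if $e$ is given label $x$, then no assignment of nonnegative integer labels to the edges of $H$ has both properties in (i).
   Context: Given fixed $a \le b$ and labels on the edges of $H$ and on $e$, a vertex $v$ of $H$ is called valid if the sum of the labels of all edges incident to $v$ (including $e$ if $v=r$) is even and lies in the interval $[2a,2b]$. *)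

theory Defs
  imports Main
begin

definition simple_graph :: "'v set \<Rightarrow> 'v set set \<Rightarrow> bool" where
  "simple_graph V E \<longleftrightarrow> finite V \<and>
     (\<forall>\<epsilon>\<in>E. \<exists>u w. u \<noteq> w \<and> u \<in> V \<and> w \<in> V \<and> \<epsilon> = {u, w})"

definition gdeg :: "'v set set \<Rightarrow> 'v \<Rightarrow> nat" where
  "gdeg E v = card {\<epsilon>\<in>E. v \<in> \<epsilon>}"

text \<open>Label sum at v: labels of edges of H incident to v, plus the label x of the
  attachment edge e if v = r.\<close>
definition label_sum :: "'v set set \<Rightarrow> 'v \<Rightarrow> nat \<Rightarrow> ('v set \<Rightarrow> nat) \<Rightarrow> 'v \<Rightarrow> nat" where
  "label_sum E r x f v = (\<Sum>\<epsilon>\<in>{\<epsilon>\<in>E. v \<in> \<epsilon>}. f \<epsilon>) + (if v = r then x else 0)"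

definition valid_vertex :: "nat \<Rightarrow> nat \<Rightarrow> 'v set set \<Rightarrow> 'v \<Rightarrow> nat \<Rightarrow> ('v set \<Rightarrow> nat) \<Rightarrow> 'v \<Rightarrow> bool" where
  "valid_vertex a b E r x f v \<longleftrightarrow>
     even (label_sum E r x f v) \<and> 2 * a \<le> label_sum E r x f v \<and> label_sum E r x f v \<le> 2 * b"

definition pos_adj :: "'v set set \<Rightarrow> ('v set \<Rightarrow> nat) \<Rightarrow> ('v \<times> 'v) set" where
  "pos_adj E f = {(u, w). {u, w} \<in> E \<and> 0 < f {u, w}}"

definition good_labelling_exists :: "nat \<Rightarrow> nat \<Rightarrow> 'v set \<Rightarrow> 'v set set \<Rightarrow> 'v \<Rightarrow> nat \<Rightarrow> bool" where
  "good_labelling_exists a b V E r x \<longleftrightarrow>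
     (\<exists>f :: 'v set \<Rightarrow> nat. (\<forall>v\<in>V. valid_vertex a b E r x f v) \<and>
        (\<forall>v\<in>V. (r, v) \<in> (pos_adj E f)\<^sup>*))"

end

theory Submission
  imports Defs
begin

text \<open>
  Call a rooted graph whose root still awaits the attachment edge a gadget. Joining the root of
  a gadget \<open>G\<close> to the root of a gadget \<open>F\<close> by a bridge is feasible with attachment label \<open>x\<close> iff
  some positive bridge label \<open>y\<close> is feasible for \<open>G\<close> while \<open>x + y\<close> is feasible for \<open>F\<close>.
  Consequently a vertex with pendant gadgets whose least positive feasible labels are
  \<open>2l\<^sub>1, \<dots>, 2l\<^sub>m\<close> has greatest feasible label \<open>2(b - \<Sum>l\<^sub>i)\<close>, and hanging it below a fresh vertex
  gives least feasible label \<open>2(\<Sum>l\<^sub>i + a - b)\<close>. Write \<open>b = (q + 1) a + r\<close> with \<open>r < a\<close>, so that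
  \<open>q + 3 \<le> d\<close>. Starting from a triangle (least positive label 2) and using \<open>q\<close> or \<open>q + 1\<close> pendant
  single vertices besides one other gadget, the least positive labels \<open>2(t + 1)\<close> can be moved
  along the orbit \<open>t \<mapsto> t - r\<close> modulo \<open>a\<close>, which reaches \<open>t = r\<close>. With a gadget of least positive
  label \<open>2(r + 1)\<close> and \<open>q\<close> single vertices, induction on \<open>k\<close> yields least label \<open>2k\<close> for every
  \<open>k < a\<close>; a single vertex has least label \<open>2a\<close>.
\<close>

lemma simple_graph_edge_subset: "simple_graph V E \<Longrightarrow> \<epsilon> \<in> E \<Longrightarrow> \<epsilon> \<subseteq> V"
  unfolding simple_graph_def by fastforce

lemma simple_graph_finite_edges: "simple_graph V E \<Longrightarrow> finite E"
  by (metis Pow_iff finite_Pow_iff finite_subset simple_graph_def simple_graph_edge_subset subsetI)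

lemma simple_graph_image:
  assumes sg: "simple_graph V E" and inj: "inj_on h V"
  shows "simple_graph (h ` V) ((`) h ` E)"
  unfolding simple_graph_def
proof (intro conjI ballI)
  show "finite (h ` V)" using sg simple_graph_def by auto
next
  fix \<epsilon>' assume "\<epsilon>' \<in> (`) h ` E"
  then obtain \<epsilon> where \<epsilon>: "\<epsilon> \<in> E" "\<epsilon>' = h ` \<epsilon>" by blast
  then obtain u w where uw: "u \<noteq> w" "u \<in> V" "w \<in> V" "\<epsilon> = {u, w}"
    using sg simple_graph_def by metis
  have "h u \<noteq> h w" using inj uw by (simp add: inj_on_eq_iff)
  then show "\<exists>u w. u \<noteq> w \<and> u \<in> h ` V \<and> w \<in> h ` V \<and> \<epsilon>' = {u, w}"
    using uw \<epsilon> by auto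
qed

lemma incident_edges_image:
  assumes sg: "simple_graph V E" and inj: "inj_on h V" and v: "v \<in> V"
  shows "{\<epsilon>'\<in>(`) h ` E. h v \<in> \<epsilon>'} = (`) h ` {\<epsilon>\<in>E. v \<in> \<epsilon>}"
proof -
  have "\<And>\<epsilon>. \<epsilon> \<in> E \<Longrightarrow> (h v \<in> h ` \<epsilon>) = (v \<in> \<epsilon>)"
    using simple_graph_edge_subset[OF sg] inj v by (meson inj_on_image_mem_iff)
  then show ?thesis by blast
qed

lemma inj_on_image_edges: "simple_graph V E \<Longrightarrow> inj_on h V \<Longrightarrow> inj_on ((`) h) E"
  by (meson PowI inj_on_image_Pow inj_on_subset simple_graph_edge_subset subsetI)

lemma gdeg_image:
  assumes sg: "simple_graph V E" and inj: "inj_on h V" and v: "v \<in> V"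
  shows "gdeg ((`) h ` E) (h v) = gdeg E v"
  unfolding gdeg_def incident_edges_image[OF assms]
  by (rule card_image) (rule inj_on_subset[OF inj_on_image_edges[OF sg inj]], blast)

lemma good_labelling_exists_imageI:
  assumes sg: "simple_graph V E" and inj: "inj_on h V" and r: "r \<in> V"
    and good: "good_labelling_exists a b V E r x"
  shows "good_labelling_exists a b (h ` V) ((`) h ` E) (h r) x"
proof -
  obtain f where valid: "\<forall>v\<in>V. valid_vertex a b E r x f v"
    and reach: "\<forall>v\<in>V. (r, v) \<in> (pos_adj E f)\<^sup>*"
    using good unfolding good_labelling_exists_def by blast
  define f' where "f' = (\<lambda>\<epsilon>. f (inv_into V h ` \<epsilon>))"
  have f'_image: "f' (h ` \<epsilon>) = f \<epsilon>" if "\<epsilon> \<in> E" for \<epsilon>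
    unfolding f'_def
    using inv_into_image_cancel[OF inj simple_graph_edge_subset[OF sg that]] by simp
  have label_sum_image: "label_sum ((`) h ` E) (h r) x f' (h v) = label_sum E r x f v"
    if v: "v \<in> V" for v
  proof -
    have "(\<Sum>\<epsilon>\<in>{\<epsilon>'\<in>(`) h ` E. h v \<in> \<epsilon>'}. f' \<epsilon>) = (\<Sum>\<epsilon>\<in>{\<epsilon>\<in>E. v \<in> \<epsilon>}. f' (h ` \<epsilon>))"
      unfolding incident_edges_image[OF sg inj v]
      by (rule sum.reindex[unfolded comp_def])
        (rule inj_on_subset[OF inj_on_image_edges[OF sg inj]], blast)
    also have "\<dots> = (\<Sum>\<epsilon>\<in>{\<epsilon>\<in>E. v \<in> \<epsilon>}. f \<epsilon>)" by (rule sum.cong) (auto intro: f'_image)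
    moreover have "(h v = h r) = (v = r)" using inj v r by (simp add: inj_on_eq_iff)
    ultimately show ?thesis unfolding label_sum_def by presburger
  qed
  have reach_image: "(h r, h v) \<in> (pos_adj ((`) h ` E) f')\<^sup>*"
    if "(r, v) \<in> (pos_adj E f)\<^sup>*" for v
    using that
  proof (induction rule: rtrancl_induct)
    case (step y z)
    then have "{y, z} \<in> E" "0 < f {y, z}" unfolding pos_adj_def by auto
    moreover have "h ` {y, z} = {h y, h z}" by simp
    ultimately have "(h y, h z) \<in> pos_adj ((`) h ` E) f'"
      unfolding pos_adj_def using f'_image by (metis (mono_tags) case_prodI image_eqI mem_Collect_eq)
    then show ?case using step.IH by (rule rtrancl_into_rtrancl[rotated])
  qed simp
  show ?thesis unfolding good_labelling_exists_def
  proof (intro exI[of _ f'] conjI ballI)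
    fix v' assume "v' \<in> h ` V"
    then obtain v where v: "v \<in> V" "v' = h v" by blast
    show "valid_vertex a b ((`) h ` E) (h r) x f' v'"
      using valid v label_sum_image unfolding valid_vertex_def by simp
    show "(h r, v') \<in> (pos_adj ((`) h ` E) f')\<^sup>*" using reach_image reach v by simp
  qed
qed

lemma good_labelling_exists_image_iff:
  assumes sg: "simple_graph V E" and inj: "inj_on h V" and r: "r \<in> V"
  shows "good_labelling_exists a b (h ` V) ((`) h ` E) (h r) x \<longleftrightarrow>
    good_labelling_exists a b V E r x"
proof
  define g where "g = inv_into V h"
  have g_cancel: "g ` h ` A = A" if "A \<subseteq> V" for A
    unfolding g_def using inv_into_image_cancel[OF inj that] .
  assume "good_labelling_exists a b (h ` V) ((`) h ` E) (h r) x"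
  from good_labelling_exists_imageI[OF simple_graph_image[OF sg inj] _ _ this, of g]
  have "good_labelling_exists a b (g ` h ` V) ((`) g ` (`) h ` E) (g (h r)) x"
    using r unfolding g_def by (simp add: inj_on_inv_into)
  moreover have "(`) g ` (`) h ` E = E"
    using g_cancel simple_graph_edge_subset[OF sg] by (simp add: image_image)
  ultimately show "good_labelling_exists a b V E r x"
    using g_cancel[of V] g_cancel[of "{r}"] r by simp
qed (rule good_labelling_exists_imageI[OF assms])

section \<open>Joining two rooted graphs by a bridge\<close>

locale bridge =
  fixes VF EF rF VG EG rG
  assumes sgF: "simple_graph VF EF" and sgG: "simple_graph VG EG"
    and rF: "rF \<in> VF" and rG: "rG \<in> VG" and disjoint: "VF \<inter> VG = {}"
begin

abbreviation "V \<equiv> VF \<union> VG"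
abbreviation "E \<equiv> EF \<union> EG \<union> {{rF, rG}}"

lemma roots_distinct: "rF \<noteq> rG"
  using rF rG disjoint by blast

lemma bridge_notin: "{rF, rG} \<notin> EF" "{rF, rG} \<notin> EG"
  using simple_graph_edge_subset[OF sgF] simple_graph_edge_subset[OF sgG] rF rG disjoint by blast+

lemma edges_disjoint: "EF \<inter> EG = {}"
proof -
  have "\<epsilon> \<noteq> {}" if "\<epsilon> \<in> EF" for \<epsilon> using sgF that unfolding simple_graph_def by fastforce
  then show ?thesis
    using simple_graph_edge_subset[OF sgF] simple_graph_edge_subset[OF sgG] disjoint by blast
qed

lemma simple_graph_bridge: "simple_graph V E"
  unfolding simple_graph_def
proof (intro conjI ballI)
  show "finite V" using sgF sgG unfolding simple_graph_def by simp
next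
  fix \<epsilon> assume "\<epsilon> \<in> E"
  then consider "\<epsilon> \<in> EF" | "\<epsilon> \<in> EG" | "\<epsilon> = {rF, rG}" by blast
  then show "\<exists>u w. u \<noteq> w \<and> u \<in> V \<and> w \<in> V \<and> \<epsilon> = {u, w}"
  proof cases
    case 1
    then show ?thesis using sgF unfolding simple_graph_def by blast
  next
    case 2
    then show ?thesis using sgG unfolding simple_graph_def by blast
  next
    case 3
    then show ?thesis using roots_distinct rF rG by blast
  qed
qed

lemma incident_left:
  "v \<in> VF \<Longrightarrow> {\<epsilon>\<in>E. v \<in> \<epsilon>} = {\<epsilon>\<in>EF. v \<in> \<epsilon>} \<union> (if v = rF then {{rF, rG}} else {})"
  using simple_graph_edge_subset[OF sgG] disjoint roots_distinct rF rG by auto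

lemma incident_right:
  "v \<in> VG \<Longrightarrow> {\<epsilon>\<in>E. v \<in> \<epsilon>} = {\<epsilon>\<in>EG. v \<in> \<epsilon>} \<union> (if v = rG then {{rF, rG}} else {})"
  using simple_graph_edge_subset[OF sgF] disjoint roots_distinct rF rG by auto

lemma gdeg_left: "v \<in> VF \<Longrightarrow> gdeg E v = gdeg EF v + (if v = rF then 1 else 0)"
  unfolding gdeg_def incident_left
  using simple_graph_finite_edges[OF sgF] bridge_notin by (auto simp: card_Un_disjoint)

lemma gdeg_right: "v \<in> VG \<Longrightarrow> gdeg E v = gdeg EG v + (if v = rG then 1 else 0)"
  unfolding gdeg_def incident_right
  using simple_graph_finite_edges[OF sgG] bridge_notin by (auto simp: card_Un_disjoint)

lemma label_sum_left: "v \<in> VF \<Longrightarrow> label_sum E rF x f v = label_sum EF rF (x + f {rF, rG}) f v"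
  unfolding label_sum_def incident_left
  using simple_graph_finite_edges[OF sgF] bridge_notin by (auto simp: sum.union_disjoint)

lemma label_sum_right: "v \<in> VG \<Longrightarrow> label_sum E rF x f v = label_sum EG rG (f {rF, rG}) f v"
  unfolding label_sum_def incident_right
  using simple_graph_finite_edges[OF sgG] bridge_notin disjoint rF
  by (auto simp: sum.union_disjoint)

lemma reach_bridge_cases:
  assumes "(rF, w) \<in> (pos_adj E f)\<^sup>*"
  shows "(w \<in> VF \<and> (rF, w) \<in> (pos_adj EF f)\<^sup>*) \<or>
    (w \<in> VG \<and> 0 < f {rF, rG} \<and> (rG, w) \<in> (pos_adj EG f)\<^sup>*)"
  using assms
proof (induction rule: rtrancl_induct)
  case (step y z)
  have yz: "{y, z} \<in> E" "0 < f {y, z}" using step(2) unfolding pos_adj_def by auto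
  consider "{y, z} \<in> EF" | "{y, z} \<in> EG" | "{y, z} = {rF, rG}" using yz by blast
  then show ?case
  proof cases
    case 1
    then have "y \<in> VF" "z \<in> VF" "(y, z) \<in> pos_adj EF f"
      using simple_graph_edge_subset[OF sgF] yz unfolding pos_adj_def by auto
    then show ?thesis using step.IH disjoint by (meson disjoint_iff rtrancl_into_rtrancl)
  next
    case 2
    then have "y \<in> VG" "z \<in> VG" "(y, z) \<in> pos_adj EG f"
      using simple_graph_edge_subset[OF sgG] yz unfolding pos_adj_def by auto
    then show ?thesis using step.IH disjoint by (meson disjoint_iff rtrancl_into_rtrancl)
  next
    case 3
    then show ?thesis using yz rF rG by (auto simp: doubleton_eq_iff)
  qed
qed (use rF in simp)

lemma good_labelling_exists_bridge_iff:
  "good_labelling_exists a b V E rF x \<longleftrightarrow>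
    (\<exists>y>0. good_labelling_exists a b VG EG rG y \<and> good_labelling_exists a b VF EF rF (x + y))"
proof
  assume "good_labelling_exists a b V E rF x"
  then obtain f where valid: "\<forall>v\<in>V. valid_vertex a b E rF x f v"
    and reach: "\<forall>v\<in>V. (rF, v) \<in> (pos_adj E f)\<^sup>*"
    unfolding good_labelling_exists_def by blast
  define y where "y = f {rF, rG}"
  have "0 < y" using reach_bridge_cases[of rG] reach rG disjoint unfolding y_def by blast
  moreover have "good_labelling_exists a b VG EG rG y"
    unfolding good_labelling_exists_def
  proof (intro exI[of _ f] conjI ballI)
    fix v assume v: "v \<in> VG"
    have "valid_vertex a b E rF x f v" using valid v by blast
    then show "valid_vertex a b EG rG y f v"
      unfolding valid_vertex_def y_def label_sum_right[OF v] .
    show "(rG, v) \<in> (pos_adj EG f)\<^sup>*" using reach_bridge_cases reach v disjoint by blast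
  qed
  moreover have "good_labelling_exists a b VF EF rF (x + y)"
    unfolding good_labelling_exists_def
  proof (intro exI[of _ f] conjI ballI)
    fix v assume v: "v \<in> VF"
    have "valid_vertex a b E rF x f v" using valid v by blast
    then show "valid_vertex a b EF rF (x + y) f v"
      unfolding valid_vertex_def y_def label_sum_left[OF v] .
    show "(rF, v) \<in> (pos_adj EF f)\<^sup>*" using reach_bridge_cases reach v disjoint by blast
  qed
  ultimately show "\<exists>y>0. good_labelling_exists a b VG EG rG y \<and>
    good_labelling_exists a b VF EF rF (x + y)" by blast
next
  assume "\<exists>y>0. good_labelling_exists a b VG EG rG y \<and> good_labelling_exists a b VF EF rF (x + y)"
  then obtain y fG fF where y: "0 < y"
    and validG: "\<forall>v\<in>VG. valid_vertex a b EG rG y fG v"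
    and reachG: "\<forall>v\<in>VG. (rG, v) \<in> (pos_adj EG fG)\<^sup>*"
    and validF: "\<forall>v\<in>VF. valid_vertex a b EF rF (x + y) fF v"
    and reachF: "\<forall>v\<in>VF. (rF, v) \<in> (pos_adj EF fF)\<^sup>*"
    unfolding good_labelling_exists_def by blast
  define f where "f = (\<lambda>\<epsilon>. if \<epsilon> \<in> EF then fF \<epsilon> else if \<epsilon> \<in> EG then fG \<epsilon> else y)"
  have f_bridge: "f {rF, rG} = y" unfolding f_def using bridge_notin by simp
  have label_sum_F: "label_sum EF rF z f v = label_sum EF rF z fF v" for z v
    unfolding label_sum_def f_def by (intro arg_cong[where f="\<lambda>s. s + _"] sum.cong) auto
  have label_sum_G: "label_sum EG rG z f v = label_sum EG rG z fG v" for z v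
    unfolding label_sum_def f_def using edges_disjoint
    by (intro arg_cong[where f="\<lambda>s. s + _"] sum.cong) auto
  have valid: "valid_vertex a b E rF x f v" if "v \<in> V" for v
  proof (cases "v \<in> VF")
    case True
    then show ?thesis using validF
      unfolding valid_vertex_def label_sum_left[OF True] f_bridge label_sum_F by blast
  next
    case False
    then have "v \<in> VG" using that by blast
    then show ?thesis using validG
      unfolding valid_vertex_def label_sum_right[OF \<open>v \<in> VG\<close>] f_bridge label_sum_G by blast
  qed
  have reach_F: "pos_adj EF fF \<subseteq> pos_adj E f" and reach_G: "pos_adj EG fG \<subseteq> pos_adj E f"
    unfolding pos_adj_def f_def using edges_disjoint by auto
  have "(rF, rG) \<in> pos_adj E f" unfolding pos_adj_def using f_bridge y by auto
  have "(rF, v) \<in> (pos_adj E f)\<^sup>*" if "v \<in> V" for v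
  proof (cases "v \<in> VF")
    case True
    then show ?thesis using reachF rtrancl_mono[OF reach_F] by blast
  next
    case False
    then have "(rG, v) \<in> (pos_adj E f)\<^sup>*" using that reachG rtrancl_mono[OF reach_G] by blast
    with \<open>(rF, rG) \<in> pos_adj E f\<close> show ?thesis by (rule converse_rtrancl_into_rtrancl)
  qed
  with valid show "good_labelling_exists a b V E rF x"
    unfolding good_labelling_exists_def by blast
qed

end

section \<open>Gadgets\<close>

text \<open>
  A gadget is a rooted graph \<open>H\<close> as in the theorem: its root \<open>r\<close> is still to receive the
  attachment edge \<open>e\<close>, whose label is the last argument of \<open>feasible\<close>.
\<close>

record gadget =
  verts :: "nat set"
  edges :: "nat set set"
  root :: nat

definition feasible :: "nat \<Rightarrow> nat \<Rightarrow> gadget \<Rightarrow> nat \<Rightarrow> bool" where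
  "feasible a b G x \<longleftrightarrow> good_labelling_exists a b (verts G) (edges G) (root G) x"

definition bounded_gadget :: "nat \<Rightarrow> gadget \<Rightarrow> bool" where
  "bounded_gadget d G \<longleftrightarrow> simple_graph (verts G) (edges G) \<and> root G \<in> verts G \<and>
     (\<forall>v\<in>verts G. gdeg (edges G) v + (if v = root G then 1 else 0) \<le> d)"

definition root_degree :: "gadget \<Rightarrow> nat" where
  "root_degree G = gdeg (edges G) (root G)"

text \<open>The attachment edge of \<open>G\<close> becomes a bridge to the root of \<open>F\<close>; \<open>G\<close> is shifted past \<open>F\<close>.\<close>

definition attach :: "gadget \<Rightarrow> gadget \<Rightarrow> gadget" where
  "attach F G = (let N = Suc (Max (verts F)) in
     \<lparr>verts = verts F \<union> (+) N ` verts G,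
      edges = edges F \<union> (`) ((+) N) ` edges G \<union> {{root F, N + root G}},
      root = root F\<rparr>)"

lemma attach_bridge:
  assumes F: "bounded_gadget d F" and G: "bounded_gadget d' G" and N: "N = Suc (Max (verts F))"
  shows "bridge (verts F) (edges F) (root F) ((+) N ` verts G) ((`) ((+) N) ` edges G) (N + root G)"
proof
  show "simple_graph (verts F) (edges F)" "root F \<in> verts F"
    using F unfolding bounded_gadget_def by auto
  have "inj_on ((+) N) (verts G)" by (simp add: inj_on_def)
  then show "simple_graph ((+) N ` verts G) ((`) ((+) N) ` edges G)"
    using G simple_graph_image unfolding bounded_gadget_def by blast
  show "N + root G \<in> (+) N ` verts G"
    using G unfolding bounded_gadget_def by blast
  have "finite (verts F)" using F unfolding bounded_gadget_def simple_graph_def by blast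
  then have "\<forall>v\<in>verts F. v < N" using N Max_ge le_imp_less_Suc by blast
  then show "verts F \<inter> (+) N ` verts G = {}" by force
qed

lemma feasible_attach_iff:
  assumes F: "bounded_gadget d F" and G: "bounded_gadget d' G"
  shows "feasible a b (attach F G) x \<longleftrightarrow> (\<exists>y>0. feasible a b G y \<and> feasible a b F (x + y))"
proof -
  define N where "N = Suc (Max (verts F))"
  interpret bridge "verts F" "edges F" "root F" "(+) N ` verts G" "(`) ((+) N) ` edges G" "N + root G"
    using attach_bridge[OF F G N_def] .
  have "good_labelling_exists a b ((+) N ` verts G) ((`) ((+) N) ` edges G) ((+) N (root G)) y
      \<longleftrightarrow> feasible a b G y" for y
    unfolding feasible_def
    by (rule good_labelling_exists_image_iff) (use G in \<open>auto simp: bounded_gadget_def\<close>)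
  then show ?thesis
    unfolding feasible_def attach_def Let_def N_def[symmetric]
    using good_labelling_exists_bridge_iff by simp
qed

lemma root_degree_attach:
  assumes "bounded_gadget d F" and "bounded_gadget d' G"
  shows "root_degree (attach F G) = Suc (root_degree F)"
proof -
  define N where "N = Suc (Max (verts F))"
  interpret bridge "verts F" "edges F" "root F" "(+) N ` verts G" "(`) ((+) N) ` edges G" "N + root G"
    using attach_bridge[OF assms N_def] .
  show ?thesis unfolding root_degree_def attach_def Let_def N_def[symmetric] using gdeg_left rF by simp
qed

lemma bounded_gadget_attach:
  assumes F: "bounded_gadget d F" and G: "bounded_gadget d G" and deg: "root_degree F + 2 \<le> d"
  shows "bounded_gadget d (attach F G)"
proof -
  define N where "N = Suc (Max (verts F))"
  interpret bridge "verts F" "edges F" "root F" "(+) N ` verts G" "(`) ((+) N) ` edges G" "N + root G"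
    using attach_bridge[OF F G N_def] .
  have attach_eq: "attach F G = \<lparr>verts = V, edges = E, root = root F\<rparr>"
    unfolding attach_def Let_def N_def by simp
  have "gdeg E v + (if v = root F then 1 else 0) \<le> d" if v: "v \<in> V" for v
  proof (cases "v \<in> verts F")
    case True
    have "gdeg (edges F) v + (if v = root F then 1 else 0) \<le> d"
      using F True unfolding bounded_gadget_def by blast
    then show ?thesis
      using gdeg_left[OF True] deg unfolding root_degree_def by (cases "v = root F") auto
  next
    case False
    then obtain u where u: "u \<in> verts G" "v = N + u" using v by blast
    then have "v \<noteq> root F" using rF disjoint by blast
    have "gdeg ((`) ((+) N) ` edges G) (N + u) = gdeg (edges G) u"
      using G u gdeg_image[of "verts G" "edges G" "(+) N"]
      unfolding bounded_gadget_def by (simp add: inj_on_def)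
    then have "gdeg E v = gdeg (edges G) u + (if u = root G then 1 else 0)"
      using gdeg_right u by simp
    moreover have "gdeg (edges G) u + (if u = root G then 1 else 0) \<le> d"
      using G u unfolding bounded_gadget_def by blast
    ultimately show ?thesis using \<open>v \<noteq> root F\<close> by simp
  qed
  then show ?thesis
    unfolding attach_eq bounded_gadget_def using simple_graph_bridge rF by simp
qed

definition single :: gadget where
  "single = \<lparr>verts = {0}, edges = {}, root = 0\<rparr>"

definition triangle :: gadget where
  "triangle = \<lparr>verts = {0, 1, 2}, edges = {{0, 1}, {0, 2}, {1, 2}}, root = 0\<rparr>"

lemma feasible_single_iff: "feasible a b single x \<longleftrightarrow> even x \<and> 2 * a \<le> x \<and> x \<le> 2 * b"
  unfolding feasible_def single_def good_labelling_exists_def valid_vertex_def label_sum_def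
  by simp

lemma bounded_gadget_single: "1 \<le> d \<Longrightarrow> bounded_gadget d single"
  unfolding bounded_gadget_def single_def gdeg_def simple_graph_def by simp

lemma root_degree_single: "root_degree single = 0"
  unfolding root_degree_def single_def gdeg_def by simp

lemma triangle_edges_distinct:
  "{0, 1} \<noteq> ({0, 2} :: nat set)" "{0, 1} \<noteq> ({1, 2} :: nat set)" "{0, 2} \<noteq> ({1, 2} :: nat set)"
  by (auto simp: doubleton_eq_iff)

lemma triangle_incident_edges:
  "{\<epsilon> \<in> edges triangle. 0 \<in> \<epsilon>} = {{0, 1}, {0, 2}}"
  "{\<epsilon> \<in> edges triangle. 1 \<in> \<epsilon>} = {{0, 1}, {1, 2}}"
  "{\<epsilon> \<in> edges triangle. 2 \<in> \<epsilon>} = {{0, 2}, {1, 2}}"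
  unfolding triangle_def by auto

lemma triangle_label_sum:
  "label_sum (edges triangle) 0 x f 0 = f {0, 1} + f {0, 2} + x"
  "label_sum (edges triangle) 0 x f 1 = f {0, 1} + f {1, 2}"
  "label_sum (edges triangle) 0 x f 2 = f {0, 2} + f {1, 2}"
  unfolding label_sum_def triangle_incident_edges using triangle_edges_distinct by simp_all

lemma bounded_gadget_triangle: "3 \<le> d \<Longrightarrow> bounded_gadget d triangle"
  using triangle_incident_edges triangle_edges_distinct
  unfolding bounded_gadget_def gdeg_def simple_graph_def by (auto simp: triangle_def)

text \<open>Every vertex sum is even, and each edge label enters two of them.\<close>

lemma feasible_triangle_even: "feasible a b triangle x \<Longrightarrow> even x"
proof -
  assume "feasible a b triangle x"
  then obtain f where "\<forall>v\<in>{0, 1, 2}. valid_vertex a b (edges triangle) 0 x f v"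
    unfolding feasible_def good_labelling_exists_def by (auto simp: triangle_def)
  then have "valid_vertex a b (edges triangle) 0 x f 0" "valid_vertex a b (edges triangle) 0 x f 1"
    "valid_vertex a b (edges triangle) 0 x f 2"
    by blast+
  then have "even (f {0, 1} + f {0, 2} + x)" "even (f {0, 1} + f {1, 2})" "even (f {0, 2} + f {1, 2})"
    unfolding valid_vertex_def triangle_label_sum by blast+
  then show "even x" by presburger
qed

lemma feasible_triangle_2:
  assumes "2 \<le> a" and "a \<le> b"
  shows "feasible a b triangle 2"
proof -
  define f where "f = (\<lambda>\<epsilon>::nat set. if \<epsilon> = {1, 2} then a + 1 else a - 1)"
  have f: "f {0, 1} = a - 1" "f {0, 2} = a - 1" "f {1, 2} = a + 1"
    unfolding f_def using triangle_edges_distinct by auto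
  have "valid_vertex a b (edges triangle) 0 2 f v" if "v \<in> {0, 1, 2}" for v
    using that triangle_label_sum[of 2 f] f assms unfolding valid_vertex_def by auto
  moreover have "(0, 1) \<in> pos_adj (edges triangle) f" "(0, 2) \<in> pos_adj (edges triangle) f"
    unfolding pos_adj_def triangle_def using f assms by auto
  then have "(0, v) \<in> (pos_adj (edges triangle) f)\<^sup>*" if "v \<in> {0, 1, 2}" for v
    using that by auto
  ultimately show ?thesis
    unfolding feasible_def good_labelling_exists_def by (auto simp: triangle_def)
qed

section \<open>Extremal feasible labels\<close>

definition least_label :: "nat \<Rightarrow> nat \<Rightarrow> nat \<Rightarrow> nat \<Rightarrow> gadget \<Rightarrow> bool" where
  "least_label a b d l G \<longleftrightarrow> bounded_gadget d G \<and> 0 < l \<and>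
     feasible a b G (2 * l) \<and> (\<forall>x. feasible a b G x \<longrightarrow> 2 * l \<le> x)"

definition least_pos_label :: "nat \<Rightarrow> nat \<Rightarrow> nat \<Rightarrow> nat \<Rightarrow> gadget \<Rightarrow> bool" where
  "least_pos_label a b d l G \<longleftrightarrow> bounded_gadget d G \<and> 0 < l \<and>
     feasible a b G (2 * l) \<and> (\<forall>x. feasible a b G x \<longrightarrow> 0 < x \<longrightarrow> 2 * l \<le> x)"

definition greatest_label :: "nat \<Rightarrow> nat \<Rightarrow> nat \<Rightarrow> nat \<Rightarrow> gadget \<Rightarrow> bool" where
  "greatest_label a b d h G \<longleftrightarrow> bounded_gadget d G \<and>
     feasible a b G (2 * h) \<and> (\<forall>x. feasible a b G x \<longrightarrow> x \<le> 2 * h)"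

lemma least_label_imp_least_pos_label: "least_label a b d l G \<Longrightarrow> least_pos_label a b d l G"
  unfolding least_label_def least_pos_label_def by auto

lemma least_label_single: "1 \<le> a \<Longrightarrow> a \<le> b \<Longrightarrow> 1 \<le> d \<Longrightarrow> least_label a b d a single"
  unfolding least_label_def using bounded_gadget_single feasible_single_iff by auto

lemma greatest_label_single: "a \<le> b \<Longrightarrow> 1 \<le> d \<Longrightarrow> greatest_label a b d b single"
  unfolding greatest_label_def using bounded_gadget_single feasible_single_iff by auto

lemma least_pos_label_triangle:
  "2 \<le> a \<Longrightarrow> a \<le> b \<Longrightarrow> 3 \<le> d \<Longrightarrow> least_pos_label a b d 1 triangle"
  unfolding least_pos_label_def
  using bounded_gadget_triangle feasible_triangle_2 feasible_triangle_even by fastforce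

lemma greatest_label_attach:
  assumes F: "greatest_label a b d h F" and G: "least_pos_label a b d l G"
    and "l \<le> h" and deg: "root_degree F + 2 \<le> d"
  shows "greatest_label a b d (h - l) (attach F G)"
proof -
  have bounded: "bounded_gadget d F" "bounded_gadget d G"
    using F G unfolding greatest_label_def least_pos_label_def by auto
  note feasible_iff = feasible_attach_iff[OF bounded]
  have "2 * (h - l) + 2 * l = 2 * h" using \<open>l \<le> h\<close> by simp
  then have "feasible a b F (2 * (h - l) + 2 * l)"
    using F unfolding greatest_label_def by simp
  moreover have "0 < 2 * l" "feasible a b G (2 * l)"
    using G unfolding least_pos_label_def by auto
  ultimately have "feasible a b (attach F G) (2 * (h - l))"
    unfolding feasible_iff by blast
  moreover have "x \<le> 2 * (h - l)" if feasible_x: "feasible a b (attach F G) x" for x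
  proof -
    obtain y where "0 < y" "feasible a b G y" "feasible a b F (x + y)"
      using feasible_x unfolding feasible_iff by blast
    then have "2 * l \<le> y" "x + y \<le> 2 * h"
      using F G unfolding greatest_label_def least_pos_label_def by auto
    then show ?thesis by simp
  qed
  ultimately show ?thesis
    unfolding greatest_label_def using bounded_gadget_attach[OF bounded deg] by blast
qed

lemma least_label_pendant:
  assumes P: "greatest_label a b d h P" and "0 < h" "h < a" "a \<le> b" "2 \<le> d"
  shows "least_label a b d (a - h) (attach single P)"
proof -
  have bounded: "bounded_gadget d single" "bounded_gadget d P"
    using P bounded_gadget_single \<open>2 \<le> d\<close> unfolding greatest_label_def by auto
  note feasible_iff = feasible_attach_iff[OF bounded]
  have "2 * (a - h) + 2 * h = 2 * a" using \<open>h < a\<close> by simp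
  then have "feasible a b single (2 * (a - h) + 2 * h)"
    using \<open>a \<le> b\<close> unfolding feasible_single_iff by simp
  moreover have "0 < 2 * h" "feasible a b P (2 * h)"
    using P \<open>0 < h\<close> unfolding greatest_label_def by auto
  ultimately have "feasible a b (attach single P) (2 * (a - h))"
    unfolding feasible_iff by blast
  moreover have "2 * (a - h) \<le> x" if feasible_x: "feasible a b (attach single P) x" for x
  proof -
    obtain y where "feasible a b P y" "feasible a b single (x + y)"
      using feasible_x unfolding feasible_iff by blast
    then have "y \<le> 2 * h" "2 * a \<le> x + y"
      using P unfolding greatest_label_def feasible_single_iff by auto
    then show ?thesis by simp
  qed
  ultimately show ?thesis
    unfolding least_label_def
    using bounded_gadget_attach[OF bounded] root_degree_single assms by auto
qed

fun fan :: "gadget list \<Rightarrow> gadget" where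
  "fan [] = single"
| "fan (G # Gs) = attach (fan Gs) G"

lemma greatest_label_fan:
  assumes "list_all2 (least_pos_label a b d) ls Gs" and "length Gs < d"
    and "sum_list ls \<le> b" and "a \<le> b"
  shows "greatest_label a b d (b - sum_list ls) (fan Gs) \<and> root_degree (fan Gs) = length Gs"
  using assms
proof (induction ls Gs rule: list_all2_induct)
  case Nil
  then show ?case using greatest_label_single root_degree_single by simp
next
  case (Cons l ls G Gs)
  have IH: "greatest_label a b d (b - sum_list ls) (fan Gs)" "root_degree (fan Gs) = length Gs"
    using Cons by auto
  have "greatest_label a b d (b - sum_list ls - l) (fan (G # Gs))"
    using greatest_label_attach[OF IH(1) Cons.hyps(1)] IH(2) Cons.prems by simp
  moreover have "bounded_gadget d (fan Gs)" "bounded_gadget d G"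
    using IH(1) Cons.hyps(1) unfolding greatest_label_def least_pos_label_def by auto
  then have "root_degree (fan (G # Gs)) = Suc (length Gs)"
    using root_degree_attach IH(2) by simp
  ultimately show ?case by (simp add: add.commute)
qed

lemma least_label_pendant_fan:
  assumes "list_all2 (least_pos_label a b d) ls Gs" and "length Gs < d" and "2 \<le> d"
    and "b < sum_list ls + a" and "sum_list ls < b" and "a \<le> b"
  shows "least_label a b d (sum_list ls + a - b) (attach single (fan Gs))"
proof -
  have "greatest_label a b d (b - sum_list ls) (fan Gs)"
    using greatest_label_fan assms by simp
  from least_label_pendant[OF this] assms show ?thesis by (simp add: add.commute)
qed

lemma list_all2_replicate: "P x y \<Longrightarrow> list_all2 P (replicate n x) (replicate n y)"
  by (induction n) auto

context
  fixes a b d q r :: nat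
  assumes a: "2 \<le> a" and b: "b = (q + 1) * a + r" and r: "r < a" and q: "q + 3 \<le> d"
begin

lemma a_le_b: "a \<le> b"
  using b by simp

lemma least_pos_label_single: "least_pos_label a b d a single"
  using least_label_single a a_le_b q by (intro least_label_imp_least_pos_label) simp

lemma least_label_pendant_fan_singles:
  assumes "list_all2 (least_pos_label a b d) ls Gs" and "length Gs + m < d"
    and "b < sum_list ls + m * a + a" and "sum_list ls + m * a < b"
  shows "least_label a b d (sum_list ls + m * a + a - b)
    (attach single (fan (Gs @ replicate m single)))"
proof -
  have "list_all2 (least_pos_label a b d) (ls @ replicate m a) (Gs @ replicate m single)"
    using assms(1) least_pos_label_single by (simp add: list_all2_appendI list_all2_replicate)
  moreover have "sum_list (ls @ replicate m a) = sum_list ls + m * a"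
    by (simp add: sum_list_replicate)
  ultimately show ?thesis
    using least_label_pendant_fan[of a b d "ls @ replicate m a" "Gs @ replicate m single"]
      assms a_le_b q by simp
qed

lemma least_pos_label_rotate:
  assumes G: "least_pos_label a b d (t + 1) G" and "t < a" and "0 < r"
  shows "\<exists>G'. least_pos_label a b d ((t + (a - r)) mod a + 1) G'"
proof -
  have G_list: "list_all2 (least_pos_label a b d) [t + 1] [G]" using G by simp
  consider "r \<le> t" | "t + 1 < r" | "t + 1 = r" by linarith
  then show ?thesis
  proof cases
    case 1
    have eq: "t + (a - r) = (t - r) + a" using 1 r by simp
    have "(t + (a - r)) mod a = t - r" unfolding eq using \<open>t < a\<close> by simp
    then have "(t + (a - r)) mod a + 1 = t + 1 + q * a + a - b" using 1 b by simp
    moreover have "least_label a b d (t + 1 + q * a + a - b)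
        (attach single (fan ([G] @ replicate q single)))"
      using least_label_pendant_fan_singles[OF G_list, of q] 1 assms b q by simp
    ultimately show ?thesis using least_label_imp_least_pos_label by metis
  next
    case 2
    have "(t + (a - r)) mod a + 1 = t + 1 + Suc q * a + a - b" using 2 r b by simp
    moreover have "least_label a b d (t + 1 + Suc q * a + a - b)
        (attach single (fan ([G] @ replicate (Suc q) single)))"
      using least_label_pendant_fan_singles[OF G_list, of "Suc q"] 2 assms b q r by simp
    ultimately show ?thesis using least_label_imp_least_pos_label by metis
  next
    case 3
    then have "(t + (a - r)) mod a + 1 = a" using r by simp
    then show ?thesis using least_pos_label_single by metis
  qed
qed

lemma least_pos_label_orbit:
  assumes "0 < r"
  shows "\<exists>G. least_pos_label a b d (n * (a - r) mod a + 1) G"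
proof (induction n)
  case 0
  have "least_pos_label a b d 1 triangle" using least_pos_label_triangle a a_le_b q by simp
  then show ?case by auto
next
  case (Suc n)
  then obtain G where "least_pos_label a b d (n * (a - r) mod a + 1) G" by blast
  moreover have "(n * (a - r) mod a + (a - r)) mod a = Suc n * (a - r) mod a"
    by (metis mod_add_left_eq mult_Suc add.commute)
  ultimately show ?case using least_pos_label_rotate assms a by fastforce
qed

text \<open>The orbit reaches \<open>r\<close> after \<open>a - 1\<close> steps, since \<open>(a - 1)(a - r) = (a - r - 1) a + r\<close>.\<close>

lemma least_pos_label_rem_succ: "\<exists>H. least_pos_label a b d (r + 1) H"
proof (cases "r = 0")
  case True
  have "least_pos_label a b d 1 triangle" using least_pos_label_triangle a a_le_b q by simp
  then show ?thesis using True by auto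
next
  case False
  obtain s where a_eq: "a = r + 1 + s" using r less_imp_Suc_add by fastforce
  have "(a - 1) * (a - r) = s * a + r"
    unfolding a_eq by (simp add: algebra_simps)
  then have "(a - 1) * (a - r) mod a = r" using r by simp
  then show ?thesis using least_pos_label_orbit[of "a - 1"] False by simp
qed

lemma least_label_below: "0 < k \<Longrightarrow> k < a \<Longrightarrow> \<exists>G. least_label a b d k G"
proof (induction k)
  case (Suc k)
  obtain H where H: "least_pos_label a b d (r + 1) H"
    using least_pos_label_rem_succ by blast
  show ?case
  proof (cases "k = 0")
    case True
    have "list_all2 (least_pos_label a b d) [r + 1] [H]" using H by simp
    from least_label_pendant_fan_singles[OF this, of q] True Suc.prems q b
    show ?thesis by auto
  next
    case False
    then obtain X where "least_label a b d k X" using Suc by auto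
    then have "list_all2 (least_pos_label a b d) [k, r + 1] [X, H]"
      using H by (simp add: least_label_imp_least_pos_label)
    from least_label_pendant_fan_singles[OF this, of q] Suc.prems q b
    show ?thesis by auto
  qed
qed simp

end

lemma diff_div_add_3_le:
  fixes a b d :: nat
  assumes "3 \<le> d" and "a \<le> b" and "b < a * (d - 1)"
  shows "(b - a) div a + 3 \<le> d"
proof -
  have "(b - a) div a * a \<le> b - a" by (rule div_times_less_eq_dividend)
  also have "b - a < (d - 2) * a"
    using assms by (simp add: algebra_simps diff_mult_distrib diff_mult_distrib2)
  finally have "(b - a) div a < d - 2" by simp
  then show ?thesis using assms by linarith
qed

theorem lemma3p6:
  fixes d a b k :: nat
  assumes "3 \<le> d" and "1 \<le> a" and "a \<le> b" and "b < a * (d - 1)"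
    and "1 \<le> k" and "k \<le> a"
  shows "\<exists>(V :: nat set) E r. simple_graph V E \<and> r \<in> V \<and>
           (\<forall>v\<in>V. gdeg E v + (if v = r then 1 else 0) \<le> d) \<and>
           good_labelling_exists a b V E r (2 * k) \<and>
           (\<forall>x < 2 * k. \<not> good_labelling_exists a b V E r x)"
proof -
  have "\<exists>G. least_label a b d k G"
  proof (cases "k = a")
    case True
    have "least_label a b d a single" using least_label_single assms by simp
    then show ?thesis using True by blast
  next
    case False
    define q r where "q = (b - a) div a" and "r = (b - a) mod a"
    have "b = (q + 1) * a + r" "r < a"
      using assms unfolding q_def r_def by auto
    moreover have "q + 3 \<le> d"
      using diff_div_add_3_le assms unfolding q_def by blast
    ultimately show ?thesis using least_label_below[of a] False assms by auto
  qed
  then show ?thesis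
    unfolding least_label_def bounded_gadget_def feasible_def by (meson not_less)
qed

end
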